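(* Let $\mathcal{A}$ be a finite set of alternatives, $N\ge2$, $i\in\{1,\dots,N\}$, and $w:\underline{\mathcal{P}}^N\to\underline{\mathcal{P}}$ satisfy Unanimity and IIA. If $w$ has a dictator at $i$ and satisfies Unrestricted Domain, then the self-reference system $(w,\Omega_i)$ with valid elements $\mathcal{P}^N$ is not quasi-Gödelian with respect to $\Upsilon_i=(\mathbf{c},\dots,\mathbf{i},\dots,\mathbf{c})$.
   Context: $\mathcal{P}$: weak orders on $\mathcal{A}$; $\underline{\mathcal{P}}=\mathcal{P}\cup\{\mathbf{c}\}$, $\mathbf{c}$ a new element (contradictory preference cycle). Strictness order: $r\le s$ iff every strict preference of $s$ is one of $r$; $\mathbf{c}$ bottom, $\mathbf{i}$ (total indifference) top; $\wedge,\vee$ meet and join; $\neg\mathbf{c}=\mathbf{i}$, $\neg\mathbf{i}=\mathbf{c}$, otherwise $\neg r$ reverses all strict preferences of $r$. On $\underline{\mathcal{P}}^N$ operations and order are coordinatewise; valid elements are $\mathcal{P}^N$; $p,q$ are inconsistent if $p_j\wedge q_j=\mathbf{c}$ for some $j$. $\Omega_i((p_1,\dots,p_N),r)=(\mathbf{c},\dots,p_i\wedge r,\dots,\mathbf{c})$; $e\ast f:=\Omega_i(e,w(f))$. For $d\in\mathcal{P}^N$: $d$ is a quasi-Gödel sentence w.r.t. $\Upsilon$ if $d\le\neg(\Upsilon\ast d)$; $(\Upsilon,d)$ is quasi-consistent if $d\le\neg(\Upsilon\ast\neg d)$ and quasi-complete if $\neg(\Upsilon\ast d)$, $\neg(\Upsilon\ast\neg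 d)$ are inconsistent. The system is quasi-Gödelian w.r.t. $\Upsilon$ if some $d\in\mathcal{P}^N$ is a quasi-Gödel sentence and $(\Upsilon,d)$ does not satisfy both quasi-consistency and quasi-completeness. Unanimity: if all individuals of $p\in\mathcal{P}^N$ strictly prefer $a$ to $b$, so does $w(p)$. IIA: aggregate comparison of $a,b$ depends only on individuals' comparisons of $a,b$. Dictator at $i$: for all $p\in\mathcal{P}^N$, $w(p)=\mathbf{c}\Rightarrow p_i=\mathbf{i}$ and $p_i\ne\mathbf{i}\Rightarrow w(p)\le p_i$. Unrestricted Domain: $w(\mathcal{P}^N)=\mathcal{P}$. *)

theory Defs
  imports Main
begin

text \<open>The extended set of preferences (underline P) is represented by
"'a rel option": None is the contradictory element c, Some r a weak order r.\<close>

definition weak_order :: "'a set \<Rightarrow> 'a rel \<Rightarrow> bool" where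
  "weak_order A r \<longleftrightarrow> r \<subseteq> A \<times> A \<and> (\<forall>a\<in>A. \<forall>b\<in>A. (a,b) \<in> r \<or> (b,a) \<in> r) \<and> trans r"

definition Pset :: "'a set \<Rightarrow> 'a rel option set" where
  "Pset A = Some ` {r. weak_order A r}"

definition Pbar :: "'a set \<Rightarrow> 'a rel option set" where
  "Pbar A = insert None (Pset A)"

definition indiff :: "'a set \<Rightarrow> 'a rel option" where
  "indiff A = Some (A \<times> A)"

definition strict_part :: "'a rel \<Rightarrow> 'a rel" where
  "strict_part r = {(a,b). (a,b) \<in> r \<and> (b,a) \<notin> r}"

definition ple :: "'a rel option \<Rightarrow> 'a rel option \<Rightarrow> bool" where
  "ple x y = (case x of None \<Rightarrow> True
     | Some r \<Rightarrow> (case y of None \<Rightarrow> False | Some s \<Rightarrow> strict_part s \<subseteq> strict_part r))"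

definition pmeet :: "'a set \<Rightarrow> 'a rel option \<Rightarrow> 'a rel option \<Rightarrow> 'a rel option" where
  "pmeet A x y = (THE z. z \<in> Pbar A \<and> ple z x \<and> ple z y \<and>
      (\<forall>u\<in>Pbar A. ple u x \<and> ple u y \<longrightarrow> ple u z))"

definition pneg :: "'a set \<Rightarrow> 'a rel option \<Rightarrow> 'a rel option" where
  "pneg A x = (case x of None \<Rightarrow> indiff A
     | Some r \<Rightarrow> (if Some r = indiff A then None else Some (r\<inverse>)))"

text \<open>Profiles: functions from a finite index type 'n (the individuals) to underline P.\<close>
definition valid :: "'a set \<Rightarrow> ('n \<Rightarrow> 'a rel option) set" where
  "valid A = {p. \<forall>j. p j \<in> Pset A}"

definition validbar :: "'a set \<Rightarrow> ('n \<Rightarrow> 'a rel option) set" where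
  "validbar A = {p. \<forall>j. p j \<in> Pbar A}"

definition prof_le :: "('n \<Rightarrow> 'a rel option) \<Rightarrow> ('n \<Rightarrow> 'a rel option) \<Rightarrow> bool" where
  "prof_le p q \<longleftrightarrow> (\<forall>j. ple (p j) (q j))"

definition prof_neg :: "'a set \<Rightarrow> ('n \<Rightarrow> 'a rel option) \<Rightarrow> ('n \<Rightarrow> 'a rel option)" where
  "prof_neg A p = (\<lambda>j. pneg A (p j))"

definition inconsistent :: "'a set \<Rightarrow> ('n \<Rightarrow> 'a rel option) \<Rightarrow> ('n \<Rightarrow> 'a rel option) \<Rightarrow> bool" where
  "inconsistent A p q \<longleftrightarrow> (\<exists>j. pmeet A (p j) (q j) = None)"

definition Omega :: "'a set \<Rightarrow> 'n \<Rightarrow> ('n \<Rightarrow> 'a rel option) \<Rightarrow> 'a rel option \<Rightarrow> ('n \<Rightarrow> 'a rel option)" where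
  "Omega A i p r = (\<lambda>j. if j = i then pmeet A (p i) r else None)"

definition star :: "'a set \<Rightarrow> 'n \<Rightarrow> (('n \<Rightarrow> 'a rel option) \<Rightarrow> 'a rel option)
     \<Rightarrow> ('n \<Rightarrow> 'a rel option) \<Rightarrow> ('n \<Rightarrow> 'a rel option) \<Rightarrow> ('n \<Rightarrow> 'a rel option)" where
  "star A i w e f = Omega A i e (w f)"

definition Upsilon :: "'a set \<Rightarrow> 'n \<Rightarrow> ('n \<Rightarrow> 'a rel option)" where
  "Upsilon A i = (\<lambda>j. if j = i then indiff A else None)"

definition quasi_goedel_sentence where
  "quasi_goedel_sentence A i w Y d \<longleftrightarrow>
     d \<in> valid A \<and> prof_le d (prof_neg A (star A i w Y d))"

definition quasi_consistent where
  "quasi_consistent A i w Y d \<longleftrightarrow> prof_le d (prof_neg A (star A i w Y (prof_neg A d)))"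

definition quasi_complete where
  "quasi_complete A i w Y d \<longleftrightarrow>
     inconsistent A (prof_neg A (star A i w Y d)) (prof_neg A (star A i w Y (prof_neg A d)))"

definition quasi_goedelian where
  "quasi_goedelian A i w Y \<longleftrightarrow>
     (\<exists>d \<in> valid A. quasi_goedel_sentence A i w Y d \<and>
        \<not> (quasi_consistent A i w Y d \<and> quasi_complete A i w Y d))"

text \<open>Strict preference of a (valid) preference; the bottom c is regarded as containing
every strict preference (it is below everything in the strictness order).\<close>
definition sprefers :: "'a rel option \<Rightarrow> 'a \<Rightarrow> 'a \<Rightarrow> bool" where
  "sprefers x a b = (case x of None \<Rightarrow> True | Some r \<Rightarrow> (a,b) \<in> strict_part r)"

definition unanimity :: "'a set \<Rightarrow> (('n \<Rightarrow> 'a rel option) \<Rightarrow> 'a rel option) \<Rightarrow> bool" where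
  "unanimity A w \<longleftrightarrow> (\<forall>p\<in>valid A. \<forall>a\<in>A. \<forall>b\<in>A.
      (\<forall>j. sprefers (p j) a b) \<longrightarrow> sprefers (w p) a b)"

definition comp_ab :: "'a rel option \<Rightarrow> 'a \<Rightarrow> 'a \<Rightarrow> (bool \<times> bool) option" where
  "comp_ab x a b = map_option (\<lambda>r. ((a,b) \<in> r, (b,a) \<in> r)) x"

definition IIA :: "'a set \<Rightarrow> (('n \<Rightarrow> 'a rel option) \<Rightarrow> 'a rel option) \<Rightarrow> bool" where
  "IIA A w \<longleftrightarrow> (\<forall>p\<in>valid A. \<forall>q\<in>valid A. \<forall>a\<in>A. \<forall>b\<in>A.
      (\<forall>j. comp_ab (p j) a b = comp_ab (q j) a b) \<longrightarrow> comp_ab (w p) a b = comp_ab (w q) a b)"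

definition dictator_at :: "'a set \<Rightarrow> (('n \<Rightarrow> 'a rel option) \<Rightarrow> 'a rel option) \<Rightarrow> 'n \<Rightarrow> bool" where
  "dictator_at A w i \<longleftrightarrow> (\<forall>p\<in>valid A.
      (w p = None \<longrightarrow> p i = indiff A) \<and> (p i \<noteq> indiff A \<longrightarrow> ple (w p) (p i)))"

definition unrestricted_domain :: "'a set \<Rightarrow> (('n \<Rightarrow> 'a rel option) \<Rightarrow> 'a rel option) \<Rightarrow> bool" where
  "unrestricted_domain A w \<longleftrightarrow> w ` valid A = Pset A"

end

theory Submission
  imports Defs
begin

(* At the coordinate i, Upsilon_i * d is just w(d), so a quasi-Goedel sentence d
would satisfy w(d) \<le> d_i \<le> \<not> w(d), the first inequality by dictatorship. By
Unrestricted Domain w(d) is a weak order, and no weak order lies below its own negation: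
the negation of total indifference is the contradictory element c, and for any other weak
order it would force every strict preference to hold reversed as well. Hence there is no
quasi-Goedel sentence at all; of the hypotheses only dictatorship and Unrestricted Domain
are needed. *)

lemma weak_order_eqI:
  assumes "weak_order A r" "weak_order A s" "strict_part r = strict_part s"
  shows "r = s"
proof -
  have "(a,b) \<in> r \<longleftrightarrow> (b,a) \<notin> strict_part r" "(a,b) \<in> s \<longleftrightarrow> (b,a) \<notin> strict_part s"
    if "a \<in> A" "b \<in> A" for a b
    using assms(1,2) that unfolding weak_order_def strict_part_def by blast+
  moreover have "r \<subseteq> A \<times> A" "s \<subseteq> A \<times> A"
    using assms(1,2) unfolding weak_order_def by auto
  ultimately show ?thesis
    using assms(3) by auto
qed

lemma weak_order_Times: "weak_order A (A \<times> A)"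
  unfolding weak_order_def trans_def by auto

lemma strict_part_Times: "strict_part (A \<times> A) = {}"
  unfolding strict_part_def by auto

lemma strict_part_converse: "strict_part (r\<inverse>) = (strict_part r)\<inverse>"
  unfolding strict_part_def by auto

lemma ple_refl: "ple x x"
  unfolding ple_def by (auto split: option.splits)

lemma ple_trans: "ple x y \<Longrightarrow> ple y z \<Longrightarrow> ple x z"
  unfolding ple_def by (auto split: option.splits)

lemma ple_indiff: "x \<in> Pbar A \<Longrightarrow> ple x (indiff A)"
  unfolding ple_def indiff_def Pbar_def Pset_def strict_part_def by (auto split: option.splits)

lemma ple_antisym:
  assumes "x \<in> Pbar A" "y \<in> Pbar A" "ple x y" "ple y x"
  shows "x = y"
  using assms weak_order_eqI unfolding Pbar_def Pset_def ple_def
  by (auto split: option.splits)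

lemma pmeet_indiff_left:
  assumes "x \<in> Pbar A"
  shows "pmeet A (indiff A) x = x"
  unfolding pmeet_def
proof (rule the_equality)
  show "x \<in> Pbar A \<and> ple x (indiff A) \<and> ple x x \<and>
      (\<forall>u\<in>Pbar A. ple u (indiff A) \<and> ple u x \<longrightarrow> ple u x)"
    using assms ple_indiff ple_refl by blast
next
  fix z
  assume "z \<in> Pbar A \<and> ple z (indiff A) \<and> ple z x \<and>
      (\<forall>u\<in>Pbar A. ple u (indiff A) \<and> ple u x \<longrightarrow> ple u z)"
  then show "z = x"
    using assms ple_indiff ple_refl ple_antisym by blast
qed

lemma star_Upsilon_self:
  assumes "w d \<in> Pbar A"
  shows "star A i w (Upsilon A i) d i = w d"
  unfolding star_def Omega_def Upsilon_def using pmeet_indiff_left[OF assms] by simp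

lemma not_ple_pneg:
  assumes "x \<in> Pset A"
  shows "\<not> ple x (pneg A x)"
proof
  assume below: "ple x (pneg A x)"
  obtain r where x: "x = Some r" and r: "weak_order A r"
    using assms unfolding Pset_def by auto
  show False
  proof (cases "x = indiff A")
    case True
    then show False
      using below x unfolding pneg_def ple_def indiff_def by simp
  next
    case False
    then have "(strict_part r)\<inverse> \<subseteq> strict_part r"
      using below x unfolding pneg_def ple_def by (simp add: strict_part_converse)
    then have "strict_part r = strict_part (A \<times> A)"
      unfolding strict_part_Times strict_part_def by auto
    then have "r = A \<times> A"
      using weak_order_eqI[OF r weak_order_Times] by simp
    then show False
      using False x unfolding indiff_def by simp
  qed
qed

lemma dictator_at_ple:
  assumes "dictator_at A w i" "p \<in> valid A" "w p \<in> Pbar A"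
  shows "ple (w p) (p i)"
  using assms ple_indiff unfolding dictator_at_def by metis

lemma no_quasi_goedel_sentence:
  assumes "dictator_at A w i" "unrestricted_domain A w"
  shows "\<not> quasi_goedel_sentence A i w (Upsilon A i) d"
proof
  assume "quasi_goedel_sentence A i w (Upsilon A i) d"
  then have d: "d \<in> valid A" and goedel: "ple (d i) (prof_neg A (star A i w (Upsilon A i) d) i)"
    unfolding quasi_goedel_sentence_def prof_le_def by auto
  have wd: "w d \<in> Pset A"
    using assms(2) d unfolding unrestricted_domain_def by blast
  then have wd_bar: "w d \<in> Pbar A"
    unfolding Pbar_def by simp
  have "ple (w d) (d i)"
    using dictator_at_ple[OF assms(1) d wd_bar] .
  moreover have "ple (d i) (pneg A (w d))"
    using goedel star_Upsilon_self[of w d A i, OF wd_bar] unfolding prof_neg_def by simp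
  ultimately show False
    using not_ple_pneg[OF wd] ple_trans by blast
qed

theorem theorem12:
  fixes A :: "'a set"
    and w :: "('n::finite \<Rightarrow> 'a rel option) \<Rightarrow> 'a rel option"
    and i :: 'n
  assumes "finite A"
    and "card (UNIV :: 'n set) \<ge> 2"
    and "\<forall>p \<in> validbar A. w p \<in> Pbar A"
    and "unanimity A w"
    and "IIA A w"
    and "dictator_at A w i"
    and "unrestricted_domain A w"
  shows "\<not> quasi_goedelian A i w (Upsilon A i)"
  using no_quasi_goedel_sentence[OF assms(6,7)] unfolding quasi_goedelian_def by blast

end
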